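(* Let $I_0\subseteq[n]$ and $\bar J_0\subseteq[\bar d]$ be nonempty. (b) If $\mathcal M=\{M_{I,\bar J}\}$ is an $(n,d)$-matching ensemble, then deleting from every $M_{I,\bar J}$ all vertices outside $I_0\sqcup\bar J_0$ (and removing duplicates) yields exactly the collection $\{M_{I,\bar J}: I\subseteq I_0,\ \bar J\subseteq\bar J_0,\ |I|=|\bar J|\}$, which contains exactly one bijection for each such pair and is a matching ensemble on $I_0\sqcup\bar J_0$. (c) If $\mathcal T$ is an extended $(n,d)$-tope arrangement, then its $(I_0,\bar J_0)$-minor is an extended $(|I_0|,|\bar J_0|)$-tope arrangement on $I_0\sqcup\bar J_0$ (i.e. it consists of pairwise compatible topes $I_0\to\bar J_0$, exactly one of each position $v\in\mathbb Z_{\ge0}^{\bar J_0}$ with coordinate sum $|I_0|$). (d) If $\mathcal T$ is an $(n,d)$-pre-trianguloid, then its $(I_0,\bar J_0)$-minor is a pre-trianguloid on $I_0\sqcup\bar J_0$.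
   Context: Fix positive integers $n,d$; graphs are subgraphs of the complete bipartite graph with left vertices $[n]$ and right vertices $[\bar d]=\{\bar1,\dots,\bar d\}$, identified with edge sets. $LD,RD$ denote the vectors of left/right vertex degrees; $e_{\bar j}$ is a unit vector; lattice points of $k\Delta^{d-1}$ are vectors in $\mathbb Z_{\ge0}^{[\bar d]}$ with sum $k$. Two acyclic graphs are compatible if whenever both contain a perfect matching between the same $I\subseteq[n]$, $\bar J\subseteq[\bar d]$, these matchings coincide. A tope is a map $T:[n]\to[\bar d]$ (graph $\{(i,T(i))\}$), with position $RD(T)$. An extended $(n,d)$-tope arrangement is a collection of pairwise compatible topes $T_v$, one for each lattice point $v$ of $n\Delta^{d-1}$, with $RD(T_v)=v$. An $(n,d)$-pre-trianguloid is a collection of topes $T_v$, one for each lattice point $v$ of $n\Delta^{d-1}$, with $RD(T_v)=v$ and such that whenever $v-e_{\bar j}=v'-e_{\bar j'}$ (for lattice points $v,v'$ of $n\Delta^{d-1}$), $T_{v'}^{-1}(\bar j)\subseteq T_v^{-1}(\bar j)$. Both notions transfer verbatim to any finite left set and right set in place of $[n],[\bar d]$. The $(I_0,\bar J_0)$-minor of a collection of topes: from each tope remove all vertices outside $I_0\sqcup\bar J_0$, discard the resulting graphs in which some vertex of $I_0$ has degree $0$ (i.e. keep only topes $T$ with $T(I_0)\subseteq\bar J_0$, restricted to $I_0$), and remove duplicates. An $(n,d)$-matching ensemble is a collection of bijections $M_{I,\bar J}:I\to\bar J$ (viewed as matching graphs), one for each $I\subseteq[n],\bar J\subseteq[\bar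 d]$ with $|I|=|\bar J|$, such that (Closure) if $I'\subseteq I$, $\bar J'\subseteq\bar J$ and $M_{I,\bar J}$ contains a perfect matching between $I'$ and $\bar J'$ then $M_{I',\bar J'}\subseteq M_{I,\bar J}$; (Left linkage) if $|I|=|\bar J|+1$, the union of $M_{I',\bar J}$ over $I'\subset I$, $|I'|=|\bar J|$, is a spanning tree on $I\sqcup\bar J$ with every vertex of $\bar J$ of degree 2; (Right linkage) if $|I|+1=|\bar J|$, the union of $M_{I,\bar J'}$ over $\bar J'\subset\bar J$, $|\bar J'|=|I|$, is a spanning tree on $I\sqcup\bar J$ with every vertex of $I$ of degree 2. *)

theory Defs
  imports Main
begin

type_synonym ('a,'b) bgraph = "('a \<times> 'b) set"

definition perfect_matching :: "'a set \<Rightarrow> 'b set \<Rightarrow> ('a,'b) bgraph \<Rightarrow> bool" where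
  "perfect_matching I J M \<longleftrightarrow> M \<subseteq> I \<times> J \<and>
     (\<forall>i\<in>I. \<exists>!j. (i,j) \<in> M) \<and> (\<forall>j\<in>J. \<exists>!i. (i,j) \<in> M)"

definition ldeg :: "('a,'b) bgraph \<Rightarrow> 'a \<Rightarrow> nat" where
  "ldeg G i = card {j. (i,j) \<in> G}"

definition RD :: "('a,'b) bgraph \<Rightarrow> 'b \<Rightarrow> nat" where
  "RD G j = card {i. (i,j) \<in> G}"

definition adj :: "('a,'b) bgraph \<Rightarrow> ('a + 'b) rel" where
  "adj E = {(Inl i, Inr j) | i j. (i,j) \<in> E} \<union> {(Inr j, Inl i) | i j. (i,j) \<in> E}"

definition connected_on :: "'a set \<Rightarrow> 'b set \<Rightarrow> ('a,'b) bgraph \<Rightarrow> bool" where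
  "connected_on I J E \<longleftrightarrow>
     (\<forall>x \<in> Inl ` I \<union> Inr ` J. \<forall>y \<in> Inl ` I \<union> Inr ` J. (x,y) \<in> (adj E)\<^sup>*)"

definition spanning_tree :: "'a set \<Rightarrow> 'b set \<Rightarrow> ('a,'b) bgraph \<Rightarrow> bool" where
  "spanning_tree I J E \<longleftrightarrow> E \<subseteq> I \<times> J \<and> connected_on I J E \<and>
     (\<forall>e\<in>E. \<not> connected_on I J (E - {e}))"

definition compatible :: "('a,'b) bgraph \<Rightarrow> ('a,'b) bgraph \<Rightarrow> bool" where
  "compatible G H \<longleftrightarrow> (\<forall>I J P Q. P \<subseteq> G \<and> perfect_matching I J P \<and>
       Q \<subseteq> H \<and> perfect_matching I J Q \<longrightarrow> P = Q)"

text \<open>Matching ensemble on left set L and right set R, given as a function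
(I,J) \<mapsto> M I J (only its values on I \<subseteq> L, J \<subseteq> R, |I| = |J| matter).\<close>
definition matching_ensemble ::
  "'a set \<Rightarrow> 'b set \<Rightarrow> ('a set \<Rightarrow> 'b set \<Rightarrow> ('a,'b) bgraph) \<Rightarrow> bool" where
  "matching_ensemble L R M \<longleftrightarrow>
     (\<forall>I J. I \<subseteq> L \<longrightarrow> J \<subseteq> R \<longrightarrow> card I = card J \<longrightarrow> perfect_matching I J (M I J)) \<and>
     (\<forall>I J I' J'. I \<subseteq> L \<longrightarrow> J \<subseteq> R \<longrightarrow> card I = card J \<longrightarrow> I' \<subseteq> I \<longrightarrow> J' \<subseteq> J \<longrightarrow>
         (\<exists>P. P \<subseteq> M I J \<and> perfect_matching I' J' P) \<longrightarrow> M I' J' \<subseteq> M I J) \<and>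
     (\<forall>I J. I \<subseteq> L \<longrightarrow> J \<subseteq> R \<longrightarrow> card I = card J + 1 \<longrightarrow>
         (let E = \<Union>{M I' J | I'. I' \<subseteq> I \<and> card I' = card J}
          in spanning_tree I J E \<and> (\<forall>j\<in>J. RD E j = 2))) \<and>
     (\<forall>I J. I \<subseteq> L \<longrightarrow> J \<subseteq> R \<longrightarrow> card I + 1 = card J \<longrightarrow>
         (let E = \<Union>{M I J' | J'. J' \<subseteq> J \<and> card J' = card I}
          in spanning_tree I J E \<and> (\<forall>i\<in>I. ldeg E i = 2)))"

definition tope :: "'a set \<Rightarrow> 'b set \<Rightarrow> ('a,'b) bgraph \<Rightarrow> bool" where
  "tope L R G \<longleftrightarrow> G \<subseteq> L \<times> R \<and> (\<forall>i\<in>L. \<exists>!j. (i,j) \<in> G)"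

definition lattice_points :: "'b set \<Rightarrow> nat \<Rightarrow> ('b \<Rightarrow> nat) set" where
  "lattice_points R k = {v. (\<forall>j. j \<notin> R \<longrightarrow> v j = 0) \<and> sum v R = k}"

definition unitv :: "'b \<Rightarrow> 'b \<Rightarrow> nat" where
  "unitv j = (\<lambda>k. if k = j then 1 else 0)"

definition ext_tope_arrangement ::
  "'a set \<Rightarrow> 'b set \<Rightarrow> (('b \<Rightarrow> nat) \<Rightarrow> ('a,'b) bgraph) \<Rightarrow> bool" where
  "ext_tope_arrangement L R T \<longleftrightarrow>
     (\<forall>v \<in> lattice_points R (card L). tope L R (T v) \<and> RD (T v) = v) \<and>
     (\<forall>v \<in> lattice_points R (card L). \<forall>w \<in> lattice_points R (card L).
        compatible (T v) (T w))"

text \<open>Pre-trianguloid; the condition v - e_j = v' - e_j' (in \<int>^R) is written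
equivalently as v + e_j' = v' + e_j.\<close>
definition pre_trianguloid ::
  "'a set \<Rightarrow> 'b set \<Rightarrow> (('b \<Rightarrow> nat) \<Rightarrow> ('a,'b) bgraph) \<Rightarrow> bool" where
  "pre_trianguloid L R T \<longleftrightarrow>
     (\<forall>v \<in> lattice_points R (card L). tope L R (T v) \<and> RD (T v) = v) \<and>
     (\<forall>v \<in> lattice_points R (card L). \<forall>v' \<in> lattice_points R (card L).
        \<forall>j\<in>R. \<forall>j'\<in>R. (\<forall>k. v k + unitv j' k = v' k + unitv j k) \<longrightarrow>
          {i. (i,j) \<in> T v'} \<subseteq> {i. (i,j) \<in> T v})"

definition tope_minor :: "'a set \<Rightarrow> 'b set \<Rightarrow> ('a,'b) bgraph set \<Rightarrow> ('a,'b) bgraph set" where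
  "tope_minor I0 J0 \<T> = {G \<inter> (I0 \<times> J0) | G. G \<in> \<T> \<and> (\<forall>i\<in>I0. \<exists>j\<in>J0. (i,j) \<in> G)}"

end

theory Submission
  imports Defs "HOL-Library.Function_Algebras"
begin

text \<open>
Part (b) is bookkeeping with the closure axiom: the part of \<open>M I J\<close> inside \<open>I0 \<times> J0\<close> is a
perfect matching between its own vertex sets, so it is the ensemble's matching there.

For (c) and (d) a collection of topes is treated as a set \<open>X\<close> of graphs on which the position map
\<open>RD\<close> is a bijection onto the lattice points.  Restricting the right side to \<open>J0\<close> just keeps the
topes whose position is supported on \<open>J0\<close>.  The left side is restricted one vertex \<open>i0\<close> at a
time, using only the pre-trianguloid axiom: deleting \<open>i0\<close> is onto the smaller simplex (if \<open>c\<close> is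
the image of \<open>i0\<close> in the tope at \<open>u + e\<^sub>b\<close>, the tope at \<open>u + e\<^sub>c\<close> also uses the
edge \<open>(i0, c)\<close>), it is injective by a double count over the fibers of the topes at the positions
\<open>u + e\<^sub>l\<close>, and the same device transports the axiom.  Extended tope arrangements satisfy the
pre-trianguloid axiom, because a violation yields a set of left vertices on which two of the
topes restrict to different perfect matchings onto the same right set; compatibility itself
passes to minors because it passes to subgraphs.
\<close>

definition tope_fun :: "('a,'b) bgraph \<Rightarrow> 'a \<Rightarrow> 'b" where
  "tope_fun G x = (THE y. (x,y) \<in> G)"

lemma tope_memD:
  assumes "tope L R G" "(x,y) \<in> G" shows "x \<in> L" "y \<in> R"
  using assms unfolding tope_def by auto

lemma tope_fun_eq:
  assumes "tope L R G" "(x,y) \<in> G" shows "tope_fun G x = y"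
  unfolding tope_fun_def
proof (rule the1_equality)
  show "\<exists>!y. (x,y) \<in> G" using assms tope_memD unfolding tope_def by blast
qed (fact assms(2))

lemma tope_fun_mem:
  assumes "tope L R G" "x \<in> L" shows "(x, tope_fun G x) \<in> G"
  using assms tope_fun_eq unfolding tope_def by metis

lemma tope_fun_in:
  assumes "tope L R G" "x \<in> L" shows "tope_fun G x \<in> R"
  using tope_memD(2)[OF assms(1) tope_fun_mem[OF assms]] .

lemma tope_mem_iff:
  assumes "tope L R G" shows "(x,y) \<in> G \<longleftrightarrow> x \<in> L \<and> tope_fun G x = y"
  using tope_fun_mem[OF assms] tope_fun_eq[OF assms] tope_memD[OF assms] by blast

lemma tope_eqI:
  assumes "tope L R G" "tope L R H" "\<And>x. x \<in> L \<Longrightarrow> tope_fun G x = tope_fun H x"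
  shows "G = H"
  using assms by (auto simp: tope_mem_iff[OF assms(1)] tope_mem_iff[OF assms(2)])

lemma RD_tope:
  assumes "tope L R G" shows "RD G l = card {x\<in>L. tope_fun G x = l}"
  unfolding RD_def by (simp add: tope_mem_iff[OF assms])

lemma card_preimage_eq_sum_fibers:
  assumes "finite L" "finite C"
  shows "card {x\<in>L. f x \<in> C} = (\<Sum>l\<in>C. card {x\<in>L. f x = l})"
proof -
  have "{x\<in>L. f x \<in> C} = (\<Union>l\<in>C. {x\<in>L. f x = l})" by auto
  also have "card \<dots> = (\<Sum>l\<in>C. card {x\<in>L. f x = l})"
    by (rule card_UN_disjoint) (use assms in auto)
  finally show ?thesis .
qed

lemma RD_tope_in_lattice_points:
  assumes "tope L R G" "finite L" "finite R"
  shows "RD G \<in> lattice_points R (card L)"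
proof -
  have "RD G j = 0" if "j \<notin> R" for j
  proof -
    have "{x\<in>L. tope_fun G x = j} = {}" using that tope_fun_in[OF assms(1)] by auto
    then show ?thesis by (metis RD_tope[OF assms(1)] card.empty)
  qed
  moreover have "sum (RD G) R = card {x\<in>L. tope_fun G x \<in> R}"
    by (simp add: RD_tope[OF assms(1)] card_preimage_eq_sum_fibers[OF assms(2,3)])
  moreover have "{x\<in>L. tope_fun G x \<in> R} = L" using tope_fun_in[OF assms(1)] by auto
  ultimately show ?thesis unfolding lattice_points_def by simp
qed

lemma lattice_points_add_unitv:
  assumes "u \<in> lattice_points R m" "a \<in> R" "finite R"
  shows "u + unitv a \<in> lattice_points R (Suc m)"
proof -
  have "sum (unitv a) R = 1" using assms(2,3) by (simp add: unitv_def)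
  then show ?thesis using assms by (auto simp: lattice_points_def unitv_def sum.distrib)
qed

lemma lattice_points_mono:
  assumes "J \<subseteq> R" "finite R" shows "lattice_points J m \<subseteq> lattice_points R m"
proof
  fix v assume v: "v \<in> lattice_points J m"
  have "sum v J = sum v R"
    using v assms by (intro sum.mono_neutral_left) (auto simp: lattice_points_def)
  then show "v \<in> lattice_points R m" using v assms by (auto simp: lattice_points_def)
qed

section \<open>Collections of topes indexed by their positions\<close>

definition tope_family :: "'a set \<Rightarrow> 'b set \<Rightarrow> ('a,'b) bgraph set \<Rightarrow> bool" where
  "tope_family L R X \<longleftrightarrow> (\<forall>G\<in>X. tope L R G) \<and> bij_betw RD X (lattice_points R (card L))"

definition tope_at :: "('a,'b) bgraph set \<Rightarrow> ('b \<Rightarrow> nat) \<Rightarrow> ('a,'b) bgraph" where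
  "tope_at X v = inv_into X RD v"

definition pre_trianguloid_axiom :: "'b set \<Rightarrow> ('a,'b) bgraph set \<Rightarrow> bool" where
  "pre_trianguloid_axiom R X \<longleftrightarrow> (\<forall>G\<in>X. \<forall>H\<in>X. \<forall>j\<in>R. \<forall>j'\<in>R.
     RD G + unitv j' = RD H + unitv j \<longrightarrow> {i. (i,j) \<in> H} \<subseteq> {i. (i,j) \<in> G})"

definition pairwise_compatible :: "('a,'b) bgraph set \<Rightarrow> bool" where
  "pairwise_compatible X \<longleftrightarrow> (\<forall>G\<in>X. \<forall>H\<in>X. compatible G H)"

lemma pre_trianguloid_axiomD:
  assumes "pre_trianguloid_axiom R X" "G \<in> X" "H \<in> X" "j \<in> R" "j' \<in> R"
    "RD G + unitv j' = RD H + unitv j" "(x,j) \<in> H"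
  shows "(x,j) \<in> G"
  using assms unfolding pre_trianguloid_axiom_def by blast

lemma tope_family_tope: "tope_family L R X \<Longrightarrow> G \<in> X \<Longrightarrow> tope L R G"
  unfolding tope_family_def by blast

lemma tope_family_eqI:
  "tope_family L R X \<Longrightarrow> G \<in> X \<Longrightarrow> H \<in> X \<Longrightarrow> RD G = RD H \<Longrightarrow> G = H"
  unfolding tope_family_def bij_betw_def inj_on_def by blast

lemma tope_family_tope_at:
  assumes "tope_family L R X" "v \<in> lattice_points R (card L)"
  shows "tope_at X v \<in> X" "RD (tope_at X v) = v"
  using assms bij_betw_inv_into_right[of RD X] inv_into_into[of v RD X]
  unfolding tope_family_def tope_at_def bij_betw_def by auto

lemma tope_family_eq_image_tope_at:
  assumes "tope_family L R X" shows "X = tope_at X ` lattice_points R (card L)"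
  using assms unfolding tope_family_def tope_at_def bij_betw_def
  by (metis inv_into_image_cancel order_refl)

lemma tope_family_image:
  assumes "\<And>v. v \<in> lattice_points R (card L) \<Longrightarrow> tope L R (T v) \<and> RD (T v) = v"
  shows "tope_family L R (T ` lattice_points R (card L))"
  unfolding tope_family_def bij_betw_def inj_on_def using assms by (auto simp: image_image)

lemma pre_trianguloid_imp_family:
  assumes "pre_trianguloid L R T"
  shows "tope_family L R (T ` lattice_points R (card L))"
    "pre_trianguloid_axiom R (T ` lattice_points R (card L))"
  using assms tope_family_image[of R L T]
  by (auto simp: pre_trianguloid_def pre_trianguloid_axiom_def fun_eq_iff)

lemma family_imp_pre_trianguloid:
  assumes "tope_family L R X" "pre_trianguloid_axiom R X"
  shows "pre_trianguloid L R (tope_at X)"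
  using assms tope_family_tope_at[OF assms(1)] tope_family_tope[OF assms(1)]
  unfolding pre_trianguloid_def pre_trianguloid_axiom_def
  by (simp add: fun_eq_iff)

lemma ext_tope_arrangement_imp_family:
  assumes "ext_tope_arrangement L R T"
  shows "tope_family L R (T ` lattice_points R (card L))"
    "pairwise_compatible (T ` lattice_points R (card L))"
  using assms tope_family_image[of R L T]
  by (auto simp: ext_tope_arrangement_def pairwise_compatible_def)

lemma family_imp_ext_tope_arrangement:
  assumes "tope_family L R X" "pairwise_compatible X"
  shows "ext_tope_arrangement L R (tope_at X)"
  using assms tope_family_tope_at[OF assms(1)] tope_family_tope[OF assms(1)]
  unfolding ext_tope_arrangement_def pairwise_compatible_def by simp

section \<open>Compatible topes\<close>

lemma compatibleD:
  "compatible G H \<Longrightarrow> P \<subseteq> G \<Longrightarrow> perfect_matching I J P \<Longrightarrow> Q \<subseteq> H \<Longrightarrow>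
    perfect_matching I J Q \<Longrightarrow> P = Q"
  unfolding compatible_def by blast

lemma compatible_Int: "compatible G H \<Longrightarrow> compatible (G \<inter> A) (H \<inter> B)"
  unfolding compatible_def by blast

lemma pairwise_compatible_tope_minor:
  "pairwise_compatible X \<Longrightarrow> pairwise_compatible (tope_minor I0 J0 X)"
  unfolding pairwise_compatible_def tope_minor_def using compatible_Int by blast

lemma perfect_matching_graph:
  "bij_betw f K C \<Longrightarrow> perfect_matching K C ((\<lambda>x. (x, f x)) ` K)"
  unfolding perfect_matching_def bij_betw_def inj_on_def by auto

lemma compatible_topes_agree:
  assumes "compatible G H" "tope L R G" "tope L R H" "K \<subseteq> L"
    "bij_betw (tope_fun G) K C" "bij_betw (tope_fun H) K C" "x \<in> K"
  shows "tope_fun G x = tope_fun H x"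
proof -
  have "(\<lambda>x. (x, tope_fun G x)) ` K \<subseteq> G" "(\<lambda>x. (x, tope_fun H x)) ` K \<subseteq> H"
    using assms(4) tope_fun_mem[OF assms(2)] tope_fun_mem[OF assms(3)] by auto
  then have "(\<lambda>x. (x, tope_fun G x)) ` K = (\<lambda>x. (x, tope_fun H x)) ` K"
    using perfect_matching_graph[OF assms(5)] perfect_matching_graph[OF assms(6)]
    by (intro compatibleD[OF assms(1)])
  then have "(x, tope_fun G x) \<in> (\<lambda>x. (x, tope_fun H x)) ` K" using assms(7) by (metis imageI)
  then show ?thesis by auto
qed

text \<open>Pick a section \<open>s\<close> of \<open>h\<close> over \<open>h ` D\<close>; a minimal nonempty subset \<open>C\<close> of \<open>h ` D\<close> mapped
  into itself by \<open>g \<circ> s\<close> is mapped bijectively onto itself, and \<open>K = s ` C\<close>.\<close>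
lemma ex_common_bij_betw:
  assumes "finite D" "D \<noteq> {}" "g ` D \<subseteq> h ` D"
  obtains K C where "K \<subseteq> D" "K \<noteq> {}" "bij_betw g K C" "bij_betw h K C"
proof -
  define S where "S = h ` D"
  define s where "s l = (SOME x. x \<in> D \<and> h x = l)" for l
  have s: "s l \<in> D \<and> h (s l) = l" if "l \<in> S" for l
    unfolding s_def by (rule someI_ex) (use that S_def in auto)
  define \<phi> where "\<phi> = g \<circ> s"
  have \<phi>S: "\<phi> ` S \<subseteq> S" using s assms(3) unfolding \<phi>_def S_def by fastforce
  define invariant where "invariant C \<longleftrightarrow> C \<subseteq> S \<and> C \<noteq> {} \<and> \<phi> ` C \<subseteq> C" for C
  have "invariant S" unfolding invariant_def S_def using assms(2) \<phi>S S_def by auto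
  then obtain C where C: "invariant C" and min: "\<And>C'. invariant C' \<Longrightarrow> card C \<le> card C'"
    using ex_has_least_nat[of invariant S card] by auto
  have CS: "C \<subseteq> S" and "C \<noteq> {}" and \<phi>C: "\<phi> ` C \<subseteq> C" using C invariant_def by auto
  have "finite S" using assms(1) S_def by simp
  then have "finite C" by (rule finite_subset[OF CS])
  have "invariant (\<phi> ` C)" unfolding invariant_def using CS \<open>C \<noteq> {}\<close> \<phi>C by auto
  then have "card C \<le> card (\<phi> ` C)" by (rule min)
  then have "\<phi> ` C = C" by (rule card_seteq[OF \<open>finite C\<close> \<phi>C])
  then have "bij_betw \<phi> C C"
    using \<open>finite C\<close> by (simp add: bij_betw_def eq_card_imp_inj_on)
  moreover have s_bij: "bij_betw s C (s ` C)"
    using s CS by (intro inj_on_imp_bij_betw inj_on_inverseI[of C h]) auto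
  ultimately have "bij_betw g (s ` C) C"
    using bij_betw_comp_iff[OF s_bij, of g C] unfolding \<phi>_def by blast
  moreover have "bij_betw h (s ` C) C"
    using s CS by (intro bij_betw_imageI) (auto simp: inj_on_def image_image subset_iff)
  moreover have "s ` C \<subseteq> D" using s CS by auto
  moreover have "s ` C \<noteq> {}" using \<open>C \<noteq> {}\<close> by simp
  ultimately show ?thesis by (intro that)
qed

lemma fiber_value_in_image_disagreement:
  assumes G: "tope L R G" and H: "tope L R H" and "finite L" and le: "RD G l \<le> RD H l"
    and x: "x \<in> L" "tope_fun G x \<noteq> tope_fun H x" "tope_fun G x = l"
  shows "l \<in> tope_fun H ` {y\<in>L. tope_fun G y \<noteq> tope_fun H y}"
proof (rule ccontr)
  assume l: "l \<notin> tope_fun H ` {y\<in>L. tope_fun G y \<noteq> tope_fun H y}"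
  have "{y\<in>L. tope_fun H y = l} \<subseteq> {y\<in>L. tope_fun G y = l}"
    using l by force
  moreover have "x \<in> {y\<in>L. tope_fun G y = l} - {y\<in>L. tope_fun H y = l}" using x by simp
  ultimately have "{y\<in>L. tope_fun H y = l} \<subset> {y\<in>L. tope_fun G y = l}" by blast
  then have "RD H l < RD G l"
    using \<open>finite L\<close> by (simp add: RD_tope[OF G] RD_tope[OF H] psubset_card_mono)
  then show False using le by simp
qed

lemma compatible_topes_eqI:
  assumes "compatible G H" and G: "tope L R G" and H: "tope L R H" and "finite L"
  defines "D \<equiv> {x\<in>L. tope_fun G x \<noteq> tope_fun H x}"
  assumes "tope_fun G ` D \<subseteq> tope_fun H ` D"
  shows "G = H"
proof (rule ccontr)
  assume "G \<noteq> H"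
  then have "D \<noteq> {}" using tope_eqI[OF G H] unfolding D_def by blast
  moreover have "finite D" using \<open>finite L\<close> unfolding D_def by simp
  ultimately obtain K C where "K \<subseteq> D" "K \<noteq> {}"
    and bij: "bij_betw (tope_fun G) K C" "bij_betw (tope_fun H) K C"
    using \<open>tope_fun G ` D \<subseteq> tope_fun H ` D\<close> by (metis ex_common_bij_betw)
  then obtain x where "x \<in> K" "x \<in> D" by blast
  have "tope_fun G x = tope_fun H x"
    using \<open>K \<subseteq> D\<close> \<open>x \<in> K\<close> unfolding D_def
    by (intro compatible_topes_agree[OF \<open>compatible G H\<close> G H _ bij]) auto
  then show False using \<open>x \<in> D\<close> unfolding D_def by simp
qed

lemma pairwise_compatible_imp_pre_trianguloid_axiom:
  assumes "finite L" and topes: "\<forall>G\<in>X. tope L R G" and "pairwise_compatible X"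
  shows "pre_trianguloid_axiom R X"
  unfolding pre_trianguloid_axiom_def
proof (intro ballI impI subsetI)
  fix G H j j' x0
  assume "G \<in> X" "H \<in> X" "j \<in> R" "j' \<in> R"
    and RD_eq: "RD G + unitv j' = RD H + unitv j" and "x0 \<in> {i. (i, j) \<in> H}"
  have G: "tope L R G" and H: "tope L R H" using topes \<open>G \<in> X\<close> \<open>H \<in> X\<close> by auto
  have "compatible G H"
    using \<open>pairwise_compatible X\<close> \<open>G \<in> X\<close> \<open>H \<in> X\<close> unfolding pairwise_compatible_def by blast
  show "x0 \<in> {i. (i, j) \<in> G}"
  proof (rule ccontr)
    assume "x0 \<notin> {i. (i, j) \<in> G}"
    define D where "D = {x\<in>L. tope_fun G x \<noteq> tope_fun H x}"
    have "x0 \<in> L" "tope_fun H x0 = j" "tope_fun G x0 \<noteq> j"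
      using \<open>x0 \<in> {i. (i, j) \<in> H}\<close> \<open>x0 \<notin> {i. (i, j) \<in> G}\<close>
      by (auto simp: tope_mem_iff[OF H] tope_mem_iff[OF G])
    then have "x0 \<in> D" unfolding D_def by auto
    have "tope_fun G x \<in> tope_fun H ` D" if "x \<in> D" for x
    proof (cases "tope_fun G x = j")
      case True
      then show ?thesis using \<open>x0 \<in> D\<close> \<open>tope_fun H x0 = j\<close> by (metis image_eqI)
    next
      case False
      then have "RD G (tope_fun G x) \<le> RD H (tope_fun G x)"
        using fun_cong[OF RD_eq, of "tope_fun G x"] by (simp add: unitv_def)
      then show ?thesis
        using that unfolding D_def
        by (intro fiber_value_in_image_disagreement[OF G H \<open>finite L\<close>]) auto
    qed
    then have "G = H"
      unfolding D_def by (intro compatible_topes_eqI[OF \<open>compatible G H\<close> G H \<open>finite L\<close>]) blast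
    then show False using \<open>x0 \<in> D\<close> unfolding D_def by simp
  qed
qed

section \<open>Deleting a left vertex from a pre-trianguloid\<close>

lemma card_UN_add_card_le_sum_card:
  assumes "finite C" "\<And>l. l \<in> C \<Longrightarrow> finite (A l)"
    and two: "\<And>x. x \<in> K \<Longrightarrow> g x \<in> C \<and> h x \<in> C \<and> g x \<noteq> h x \<and> x \<in> A (g x) \<and> x \<in> A (h x)"
  shows "card (\<Union>l\<in>C. A l) + card K \<le> (\<Sum>l\<in>C. card (A l))"
proof -
  define N where "N = (\<Union>l\<in>C. A l)"
  define p where "p x = (SOME l. l \<in> C \<and> x \<in> A l)" for x
  have p: "p x \<in> C \<and> x \<in> A (p x)" if "x \<in> N" for x
    unfolding p_def by (rule someI_ex) (use that N_def in auto)
  have "finite N" using assms by (simp add: N_def)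
  have "K \<subseteq> N" using two unfolding N_def by blast
  have "finite K" using \<open>finite N\<close> \<open>K \<subseteq> N\<close> finite_subset by blast
  define E where "E = (\<lambda>x. (g x, x)) ` K \<union> (\<lambda>x. (h x, x)) ` K \<union> (\<lambda>x. (p x, x)) ` (N - K)"
  have disj: "(\<lambda>x. (g x, x)) ` K \<inter> (\<lambda>x. (h x, x)) ` K = {}" using two by fastforce
  have "card E = card ((\<lambda>x. (g x, x)) ` K \<union> (\<lambda>x. (h x, x)) ` K) + card ((\<lambda>x. (p x, x)) ` (N - K))"
    unfolding E_def using \<open>finite K\<close> \<open>finite N\<close> by (intro card_Un_disjoint) auto
  also have "\<dots> = card K + card K + card (N - K)"
    using disj \<open>finite K\<close> by (simp add: card_Un_disjoint card_image inj_on_def)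
  also have "\<dots> = card N + card K"
    using card_Diff_subset[OF \<open>finite K\<close> \<open>K \<subseteq> N\<close>] card_mono[OF \<open>finite N\<close> \<open>K \<subseteq> N\<close>] by simp
  finally have card_E: "card E = card N + card K" .
  have "E \<subseteq> Sigma C A" unfolding E_def using two p by auto
  then have "card E \<le> card (Sigma C A)" using assms by (intro card_mono finite_SigmaI) auto
  also have "\<dots> = (\<Sum>l\<in>C. card (A l))" using assms by simp
  finally show ?thesis using card_E N_def by simp
qed

locale left_vertex_deletion =
  fixes L :: "'a set" and R :: "'b set" and X :: "('a,'b) bgraph set" and i0 :: 'a
  assumes finite_L: "finite L" and finite_R: "finite R" and R_nonempty: "R \<noteq> {}"
    and i0_in_L: "i0 \<in> L" and family: "tope_family L R X" and axiom: "pre_trianguloid_axiom R X"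
begin

abbreviation L' :: "'a set" where "L' \<equiv> L - {i0}"

definition del :: "('a,'b) bgraph \<Rightarrow> ('a,'b) bgraph" where
  "del G = G \<inter> (L' \<times> R)"

lemma card_L: "card L = Suc (card L')"
  using card_Suc_Diff1[OF finite_L i0_in_L] by simp

lemma tope_del: assumes "G \<in> X" shows "tope L' R (del G)"
  using tope_family_tope[OF family assms] unfolding tope_def del_def by blast

lemma tope_fun_del: assumes "G \<in> X" "x \<in> L'" shows "tope_fun (del G) x = tope_fun G x"
proof -
  have G: "tope L R G" using tope_family_tope[OF family assms(1)] .
  have "(x, tope_fun G x) \<in> del G"
    using assms(2) tope_fun_mem[OF G] tope_fun_in[OF G] unfolding del_def by auto
  then show ?thesis by (rule tope_fun_eq[OF tope_del[OF assms(1)]])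
qed

lemma RD_eq_RD_del: assumes "G \<in> X" shows "RD G = RD (del G) + unitv (tope_fun G i0)"
proof
  fix l
  have G: "tope L R G" using tope_family_tope[OF family assms] .
  have "{i. (i,l) \<in> G} = {i. (i,l) \<in> del G} \<union> (if tope_fun G i0 = l then {i0} else {})"
    using tope_memD[OF G] i0_in_L by (auto simp: del_def tope_mem_iff[OF G])
  moreover have "finite {i. (i,l) \<in> del G}"
    using finite_L by (rule finite_subset[rotated]) (auto simp: del_def)
  moreover have "i0 \<notin> {i. (i,l) \<in> del G}" by (simp add: del_def)
  ultimately have "card {i. (i,l) \<in> G} = card {i. (i,l) \<in> del G} + unitv (tope_fun G i0) l"
    by (cases "tope_fun G i0 = l") (simp_all add: unitv_def)
  then show "RD G l = (RD (del G) + unitv (tope_fun G i0)) l" by (simp add: RD_def)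
qed

lemma RD_del_in_lattice_points: "G \<in> X \<Longrightarrow> RD (del G) \<in> lattice_points R (card L')"
  using RD_tope_in_lattice_points[OF tope_del] finite_L finite_R by simp

lemma tope_at_add_unitv:
  assumes "u \<in> lattice_points R (card L')" "l \<in> R"
  shows "tope_at X (u + unitv l) \<in> X" "RD (tope_at X (u + unitv l)) = u + unitv l"
  using tope_family_tope_at[OF family] lattice_points_add_unitv[OF assms finite_R] card_L
  by simp_all

lemma RD_del_tope_at:
  assumes "u \<in> lattice_points R (card L')" "c \<in> R" "(i0, c) \<in> tope_at X (u + unitv c)"
  shows "RD (del (tope_at X (u + unitv c))) = u"
proof -
  note T = tope_at_add_unitv[OF assms(1,2)]
  have "tope_fun (tope_at X (u + unitv c)) i0 = c"
    using tope_fun_eq[OF tope_family_tope[OF family T(1)] assms(3)] .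
  then have "u + unitv c = RD (del (tope_at X (u + unitv c))) + unitv c"
    using RD_eq_RD_del[OF T(1)] T(2) by simp
  then show ?thesis by (metis add_right_imp_eq)
qed

lemma i0_edge_tope_at:
  assumes "u \<in> lattice_points R (card L')" "a \<in> R" "c \<in> R"
    and "F \<in> X" "RD F = u + unitv a" "(i0, c) \<in> F"
  shows "(i0, c) \<in> tope_at X (u + unitv c)"
proof -
  note T = tope_at_add_unitv[OF assms(1,3)]
  have "RD (tope_at X (u + unitv c)) + unitv a = RD F + unitv c"
    unfolding T(2) \<open>RD F = _\<close> by (simp only: add.assoc add.commute[of "unitv a"])
  then show ?thesis by (rule pre_trianguloid_axiomD[OF axiom T(1) assms(4,3,2) _ assms(6)])
qed

lemma ex_del_with_RD:
  assumes u: "u \<in> lattice_points R (card L')"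
  shows "\<exists>G\<in>X. RD (del G) = u"
proof -
  obtain b where b: "b \<in> R" using R_nonempty by auto
  define F where "F = tope_at X (u + unitv b)"
  have "F \<in> X" "RD F = u + unitv b" using tope_at_add_unitv[OF u b] unfolding F_def by auto
  have F: "tope L R F" using tope_family_tope[OF family \<open>F \<in> X\<close>] .
  define c where "c = tope_fun F i0"
  have c: "c \<in> R" "(i0, c) \<in> F" using tope_fun_in[OF F i0_in_L] tope_fun_mem[OF F i0_in_L] c_def by auto
  have "RD (del (tope_at X (u + unitv c))) = u"
    by (rule RD_del_tope_at[OF u c(1) i0_edge_tope_at[OF u b c(1) \<open>F \<in> X\<close> \<open>RD F = _\<close> c(2)]])
  then show ?thesis using tope_at_add_unitv(1)[OF u c(1)] by blast
qed

definition fiber_above :: "('b \<Rightarrow> nat) \<Rightarrow> 'b \<Rightarrow> 'a set" where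
  "fiber_above u l = {x. (x,l) \<in> tope_at X (u + unitv l)}"

lemma card_fiber_above:
  assumes "u \<in> lattice_points R (card L')" "l \<in> R"
  shows "card (fiber_above u l) = u l + 1"
proof -
  have "card (fiber_above u l) = RD (tope_at X (u + unitv l)) l"
    unfolding fiber_above_def RD_def ..
  then show ?thesis using tope_at_add_unitv(2)[OF assms] by (simp add: unitv_def)
qed

lemma fiber_above_subset:
  assumes "u \<in> lattice_points R (card L')" "l \<in> R" shows "fiber_above u l \<subseteq> L"
proof
  fix x assume "x \<in> fiber_above u l"
  then show "x \<in> L"
    using tope_memD(1)[OF tope_family_tope[OF family tope_at_add_unitv(1)[OF assms]]]
    unfolding fiber_above_def by blast
qed

lemma mem_fiber_above:
  assumes u: "u \<in> lattice_points R (card L')" and "G \<in> X" "j \<in> R" "RD G = u + unitv j"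
    and "(x,l) \<in> G" "l \<in> R"
  shows "x \<in> fiber_above u l"
proof -
  note T = tope_at_add_unitv[OF u \<open>l \<in> R\<close>]
  have "RD (tope_at X (u + unitv l)) + unitv j = RD G + unitv l"
    unfolding T(2) \<open>RD G = _\<close> by (simp only: add.assoc add.commute[of "unitv j"])
  then have "(x,l) \<in> tope_at X (u + unitv l)"
    by (rule pre_trianguloid_axiomD[OF axiom T(1) \<open>G \<in> X\<close> \<open>l \<in> R\<close> \<open>j \<in> R\<close> _ \<open>(x,l) \<in> G\<close>])
  then show ?thesis unfolding fiber_above_def by simp
qed

lemma mem_fiber_above_RD_del:
  assumes "F \<in> X" "x \<in> L" shows "x \<in> fiber_above (RD (del F)) (tope_fun F x)"
proof -
  have F: "tope L R F" using tope_family_tope[OF family \<open>F \<in> X\<close>] .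
  show ?thesis
    using RD_eq_RD_del[OF \<open>F \<in> X\<close>]
    by (intro mem_fiber_above[OF RD_del_in_lattice_points[OF \<open>F \<in> X\<close>] \<open>F \<in> X\<close>
          tope_fun_in[OF F i0_in_L] _ tope_fun_mem[OF F \<open>x \<in> L\<close>] tope_fun_in[OF F \<open>x \<in> L\<close>]])
qed

lemma sum_add_one_le_card_UN_fiber_above:
  assumes u: "u \<in> lattice_points R (card L')" and "C \<subseteq> R" "c0 \<in> C"
  shows "sum u C + 1 \<le> card (\<Union>l\<in>C. fiber_above u l)"
proof -
  have "finite C" using \<open>C \<subseteq> R\<close> finite_R by (rule finite_subset)
  have "c0 \<in> R" using assms by blast
  define F where "F = tope_at X (u + unitv c0)"
  have "F \<in> X" and RD_F: "RD F = u + unitv c0"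
    using tope_at_add_unitv[OF u \<open>c0 \<in> R\<close>] unfolding F_def by auto
  have F: "tope L R F" using tope_family_tope[OF family \<open>F \<in> X\<close>] .
  have "sum u C + 1 = (\<Sum>l\<in>C. RD F l)"
    using \<open>finite C\<close> \<open>c0 \<in> C\<close> by (simp add: RD_F sum.distrib unitv_def)
  also have "\<dots> = card {x\<in>L. tope_fun F x \<in> C}"
    by (simp add: RD_tope[OF F] card_preimage_eq_sum_fibers[OF finite_L \<open>finite C\<close>])
  also have "\<dots> \<le> card (\<Union>l\<in>C. fiber_above u l)"
  proof (rule card_mono)
    have "(\<Union>l\<in>C. fiber_above u l) \<subseteq> L"
      using fiber_above_subset[OF u] \<open>C \<subseteq> R\<close> by blast
    then show "finite (\<Union>l\<in>C. fiber_above u l)" using finite_L by (rule finite_subset)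
    show "{x\<in>L. tope_fun F x \<in> C} \<subseteq> (\<Union>l\<in>C. fiber_above u l)"
    proof
      fix x assume x: "x \<in> {x\<in>L. tope_fun F x \<in> C}"
      then have "x \<in> fiber_above u (tope_fun F x)"
        using \<open>C \<subseteq> R\<close> by (intro mem_fiber_above[OF u \<open>F \<in> X\<close> \<open>c0 \<in> R\<close> RD_F
            tope_fun_mem[OF F]]) auto
      then show "x \<in> (\<Union>l\<in>C. fiber_above u l)" using x by blast
    qed
  qed
  finally show ?thesis .
qed

text \<open>Double counting: every vertex of \<open>K\<close> lies in two of the sets \<open>fiber_above u l\<close>, \<open>l \<in> C\<close>,
  whose sizes add up to \<open>sum u C + card C\<close>, while their union already has \<open>sum u C + 1\<close> elements.\<close>
lemma no_common_bij_betw_of_disagreeing: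
  assumes "G \<in> X" "H \<in> X" "RD (del G) = RD (del H)" "K \<subseteq> L'" "K \<noteq> {}"
    and bij: "bij_betw (tope_fun G) K C" "bij_betw (tope_fun H) K C"
    and disagree: "\<And>x. x \<in> K \<Longrightarrow> tope_fun G x \<noteq> tope_fun H x"
  shows False
proof -
  define u where "u = RD (del G)"
  have u: "u \<in> lattice_points R (card L')" using RD_del_in_lattice_points[OF assms(1)] u_def by simp
  have G: "tope L R G" using tope_family_tope[OF family assms(1)] .
  have "C = tope_fun G ` K" using bij(1) by (simp add: bij_betw_def)
  then have "C \<subseteq> R" using tope_fun_in[OF G] \<open>K \<subseteq> L'\<close> by blast
  then have "finite C" using finite_R by (rule finite_subset)
  obtain c0 where "c0 \<in> C" using \<open>K \<noteq> {}\<close> \<open>C = tope_fun G ` K\<close> by blast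
  have "card (\<Union>l\<in>C. fiber_above u l) + card K \<le> (\<Sum>l\<in>C. card (fiber_above u l))"
  proof (rule card_UN_add_card_le_sum_card[where g = "tope_fun G" and h = "tope_fun H"])
    show "finite (fiber_above u l)" if "l \<in> C" for l
      using fiber_above_subset[OF u] \<open>C \<subseteq> R\<close> that finite_L by (meson finite_subset subsetD)
    show "tope_fun G x \<in> C \<and> tope_fun H x \<in> C \<and> tope_fun G x \<noteq> tope_fun H x \<and>
        x \<in> fiber_above u (tope_fun G x) \<and> x \<in> fiber_above u (tope_fun H x)" if "x \<in> K" for x
      using that bij disagree \<open>K \<subseteq> L'\<close> mem_fiber_above_RD_del[OF assms(1)]
        mem_fiber_above_RD_del[OF assms(2)] assms(3) u_def
      by (auto simp: bij_betw_def)
  qed (fact \<open>finite C\<close>)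
  also have "\<dots> = (\<Sum>l\<in>C. u l + 1)"
    using card_fiber_above[OF u] \<open>C \<subseteq> R\<close> by (intro sum.cong) auto
  also have "\<dots> = sum u C + card C" by (subst sum.distrib) simp
  finally show False
    using sum_add_one_le_card_UN_fiber_above[OF u \<open>C \<subseteq> R\<close> \<open>c0 \<in> C\<close>]
      bij_betw_same_card[OF bij(1)] by linarith
qed

lemma del_inj:
  assumes "G \<in> X" "H \<in> X" "RD (del G) = RD (del H)"
  shows "del G = del H"
proof (rule ccontr)
  assume "del G \<noteq> del H"
  have G': "tope L' R (del G)" and H': "tope L' R (del H)" using tope_del assms by auto
  define D where "D = {x\<in>L'. tope_fun (del G) x \<noteq> tope_fun (del H) x}"
  have "D \<noteq> {}"
  proof
    assume "D = {}"
    then have "del G = del H" by (intro tope_eqI[OF G' H']) (auto simp: D_def)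
    with \<open>del G \<noteq> del H\<close> show False ..
  qed
  have "finite D" using finite_L by (simp add: D_def)
  have "tope_fun (del G) ` D \<subseteq> tope_fun (del H) ` D"
  proof (rule image_subsetI)
    fix x assume "x \<in> D"
    then show "tope_fun (del G) x \<in> tope_fun (del H) ` D"
      unfolding D_def using assms(3) finite_L
      by (intro fiber_value_in_image_disagreement[OF G' H']) auto
  qed
  then obtain K C where "K \<subseteq> D" "K \<noteq> {}"
    and bij: "bij_betw (tope_fun (del G)) K C" "bij_betw (tope_fun (del H)) K C"
    using \<open>finite D\<close> \<open>D \<noteq> {}\<close> by (metis ex_common_bij_betw)
  have "K \<subseteq> L'" using \<open>K \<subseteq> D\<close> D_def by blast
  then have agree: "tope_fun (del F) x = tope_fun F x" if "F \<in> X" "x \<in> K" for F x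
    using tope_fun_del that by blast
  have "bij_betw (tope_fun G) K C" "bij_betw (tope_fun H) K C"
    using iffD1[OF bij_betw_cong bij(1)] iffD1[OF bij_betw_cong bij(2)] agree assms(1,2) by auto
  moreover have "tope_fun G x \<noteq> tope_fun H x" if "x \<in> K" for x
    using that \<open>K \<subseteq> D\<close> tope_fun_del assms(1,2) unfolding D_def by auto
  ultimately show False
    using no_common_bij_betw_of_disagreeing[OF assms \<open>K \<subseteq> L'\<close> \<open>K \<noteq> {}\<close>] by blast
qed

lemma del_tope_at_eq:
  assumes "G \<in> X" "c \<in> R" "(i0, c) \<in> tope_at X (RD (del G) + unitv c)"
  shows "del (tope_at X (RD (del G) + unitv c)) = del G"
proof -
  note u = RD_del_in_lattice_points[OF assms(1)]
  show ?thesis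
    using RD_del_tope_at[OF u assms(2,3)] tope_at_add_unitv(1)[OF u assms(2)] assms(1)
    by (intro del_inj) auto
qed

lemma tope_family_del: "tope_family L' R (del ` X)"
  unfolding tope_family_def bij_betw_def
proof (intro conjI)
  show "\<forall>G\<in>del ` X. tope L' R G" using tope_del by blast
  show "inj_on RD (del ` X)" using del_inj by (auto simp: inj_on_def)
  show "RD ` del ` X = lattice_points R (card L')"
  proof (intro subset_antisym subsetI)
    fix u assume "u \<in> lattice_points R (card L')"
    then obtain G where "G \<in> X" "RD (del G) = u" using ex_del_with_RD by blast
    then show "u \<in> RD ` del ` X" by (metis imageI)
  qed (use RD_del_in_lattice_points in auto)
qed

text \<open>With \<open>c\<close> the image of \<open>i0\<close> in the tope at \<open>RD G' + e\<^sub>b\<close>, both \<open>G'\<close> and \<open>H'\<close> lift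
  to topes of \<open>X\<close> containing the edge \<open>(i0, c)\<close>, and the axiom for the lifts restricts to the
  axiom for \<open>G'\<close> and \<open>H'\<close>.\<close>
lemma pre_trianguloid_axiom_del: "pre_trianguloid_axiom R (del ` X)"
  unfolding pre_trianguloid_axiom_def
proof (intro ballI impI subsetI)
  fix G' H' a b x
  assume "G' \<in> del ` X" "H' \<in> del ` X" "a \<in> R" "b \<in> R"
    and RD_eq: "RD G' + unitv b = RD H' + unitv a" and "x \<in> {i. (i, a) \<in> H'}"
  obtain G0 H0 where "G0 \<in> X" "G' = del G0" "H0 \<in> X" "H' = del H0"
    using \<open>G' \<in> del ` X\<close> \<open>H' \<in> del ` X\<close> by blast
  have uG: "RD G' \<in> lattice_points R (card L')" and uH: "RD H' \<in> lattice_points R (card L')"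
    using RD_del_in_lattice_points \<open>G0 \<in> X\<close> \<open>G' = del G0\<close> \<open>H0 \<in> X\<close> \<open>H' = del H0\<close> by auto
  define F where "F = tope_at X (RD G' + unitv b)"
  have "F \<in> X" and RD_F: "RD F = RD G' + unitv b"
    using tope_at_add_unitv[OF uG \<open>b \<in> R\<close>] unfolding F_def by auto
  have "tope L R F" using tope_family_tope[OF family \<open>F \<in> X\<close>] .
  define c where "c = tope_fun F i0"
  have "c \<in> R" "(i0, c) \<in> F"
    using tope_fun_in[OF \<open>tope L R F\<close> i0_in_L] tope_fun_mem[OF \<open>tope L R F\<close> i0_in_L] c_def by auto
  define G2 where "G2 = tope_at X (RD G' + unitv c)"
  define H2 where "H2 = tope_at X (RD H' + unitv c)"
  have "G2 \<in> X" and RD_G2: "RD G2 = RD G' + unitv c"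
    using tope_at_add_unitv[OF uG \<open>c \<in> R\<close>] unfolding G2_def by auto
  have "H2 \<in> X" and RD_H2: "RD H2 = RD H' + unitv c"
    using tope_at_add_unitv[OF uH \<open>c \<in> R\<close>] unfolding H2_def by auto
  have "(i0, c) \<in> G2" unfolding G2_def
    by (rule i0_edge_tope_at[OF uG \<open>b \<in> R\<close> \<open>c \<in> R\<close> \<open>F \<in> X\<close> RD_F \<open>(i0, c) \<in> F\<close>])
  then have "del G2 = G'"
    using del_tope_at_eq[OF \<open>G0 \<in> X\<close> \<open>c \<in> R\<close>] \<open>G' = del G0\<close> unfolding G2_def by simp
  have "(i0, c) \<in> H2" unfolding H2_def
    by (rule i0_edge_tope_at[OF uH \<open>a \<in> R\<close> \<open>c \<in> R\<close> \<open>F \<in> X\<close> _ \<open>(i0, c) \<in> F\<close>])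
      (simp only: RD_F RD_eq)
  then have "del H2 = H'"
    using del_tope_at_eq[OF \<open>H0 \<in> X\<close> \<open>c \<in> R\<close>] \<open>H' = del H0\<close> unfolding H2_def by simp
  have "(x, a) \<in> H2" "x \<in> L'"
    using \<open>x \<in> {i. (i, a) \<in> H'}\<close> \<open>del H2 = H'\<close> unfolding del_def by auto
  have "RD G2 + unitv b = (RD G' + unitv b) + unitv c"
    unfolding RD_G2 by (simp only: add.assoc add.commute[of "unitv c"])
  also have "\<dots> = (RD H' + unitv a) + unitv c" unfolding RD_eq ..
  also have "\<dots> = RD H2 + unitv a"
    unfolding RD_H2 by (simp only: add.assoc add.commute[of "unitv c"])
  finally have "(x, a) \<in> G2"
    by (rule pre_trianguloid_axiomD[OF axiom \<open>G2 \<in> X\<close> \<open>H2 \<in> X\<close> \<open>a \<in> R\<close> \<open>b \<in> R\<close> _ \<open>(x, a) \<in> H2\<close>])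
  then show "x \<in> {i. (i, a) \<in> G'}"
    using \<open>x \<in> L'\<close> \<open>a \<in> R\<close> \<open>del G2 = G'\<close> unfolding del_def by auto
qed

end

section \<open>Minors of tope families\<close>

lemma tope_family_restrict_left:
  assumes "finite L" "finite R" "R \<noteq> {}" "I0 \<subseteq> L" "tope_family L R X" "pre_trianguloid_axiom R X"
  shows "tope_family I0 R ((\<lambda>G. G \<inter> (I0 \<times> R)) ` X) \<and>
    pre_trianguloid_axiom R ((\<lambda>G. G \<inter> (I0 \<times> R)) ` X)"
  using assms
proof (induction "card (L - I0)" arbitrary: L X)
  case 0
  then have "L = I0" by auto
  have "G \<inter> (I0 \<times> R) = G" if "G \<in> X" for G
    using tope_family_tope[OF \<open>tope_family L R X\<close> that] \<open>L = I0\<close> unfolding tope_def by blast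
  then have "(\<lambda>G. G \<inter> (I0 \<times> R)) ` X = X" using image_cong[OF refl, of X] by simp
  then show ?case using 0 \<open>L = I0\<close> by simp
next
  case (Suc m)
  then have "L - I0 \<noteq> {}" by auto
  then obtain i0 where "i0 \<in> L" "i0 \<notin> I0" by blast
  interpret left_vertex_deletion L R X i0 using Suc \<open>i0 \<in> L\<close> by unfold_locales auto
  have "m = card (L' - I0)"
    using Suc.hyps(2) \<open>i0 \<in> L\<close> \<open>i0 \<notin> I0\<close> by (simp add: Diff_insert2[symmetric] insert_Diff_if)
  moreover have "I0 \<subseteq> L'" using Suc.prems(4) \<open>i0 \<notin> I0\<close> by blast
  ultimately have "tope_family I0 R ((\<lambda>G. G \<inter> (I0 \<times> R)) ` del ` X) \<and>
      pre_trianguloid_axiom R ((\<lambda>G. G \<inter> (I0 \<times> R)) ` del ` X)"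
    using Suc.prems(1-3) tope_family_del pre_trianguloid_axiom_del
    by (intro Suc.hyps(1)) auto
  moreover have "(\<lambda>G. G \<inter> (I0 \<times> R)) ` del ` X = (\<lambda>G. G \<inter> (I0 \<times> R)) ` X"
    unfolding image_image del_def using \<open>I0 \<subseteq> L'\<close> by (intro image_cong) auto
  ultimately show ?case by simp
qed

lemma RD_ne_zero_if_mem:
  assumes "tope L R G" "finite L" "(x,l) \<in> G" shows "RD G l \<noteq> 0"
proof -
  have "{i. (i,l) \<in> G} \<subseteq> L" using tope_memD(1)[OF assms(1)] by blast
  then have "finite {i. (i,l) \<in> G}" using assms(2) by (rule finite_subset)
  then show ?thesis using assms(3) by (auto simp: RD_def)
qed

lemma tope_family_restrict_right:
  assumes "finite L" "finite R" "J0 \<subseteq> R" "tope_family L R X"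
  shows "tope_family L J0 {G\<in>X. G \<subseteq> L \<times> J0}"
  unfolding tope_family_def bij_betw_def
proof (intro conjI)
  have tope_J0: "tope L J0 G" if "G \<in> X" "G \<subseteq> L \<times> J0" for G
    using tope_family_tope[OF assms(4) that(1)] that(2) unfolding tope_def by blast
  then show "\<forall>G\<in>{G\<in>X. G \<subseteq> L \<times> J0}. tope L J0 G" by blast
  show "inj_on RD {G\<in>X. G \<subseteq> L \<times> J0}"
    using tope_family_eqI[OF assms(4)] by (auto simp: inj_on_def)
  have "finite J0" using assms(2,3) by (rule finite_subset[rotated])
  show "RD ` {G\<in>X. G \<subseteq> L \<times> J0} = lattice_points J0 (card L)"
  proof (intro subset_antisym subsetI)
    fix v assume v: "v \<in> lattice_points J0 (card L)"
    define G where "G = tope_at X v"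
    have "G \<in> X" "RD G = v"
      using tope_family_tope_at[OF assms(4) subsetD[OF lattice_points_mono[OF assms(3,2)] v]] G_def by auto
    have "G \<subseteq> L \<times> J0"
    proof
      fix p assume "p \<in> G"
      obtain x l where "p = (x,l)" by fastforce
      have "tope L R G" using tope_family_tope[OF assms(4) \<open>G \<in> X\<close>] .
      have "(x,l) \<in> G" using \<open>p \<in> G\<close> \<open>p = (x,l)\<close> by simp
      then have "x \<in> L" "RD G l \<noteq> 0"
        using tope_memD(1)[OF \<open>tope L R G\<close>] RD_ne_zero_if_mem[OF \<open>tope L R G\<close> assms(1)] by auto
      then show "p \<in> L \<times> J0"
        using v \<open>RD G = v\<close> \<open>p = (x,l)\<close> unfolding lattice_points_def by auto
    qed
    then show "v \<in> RD ` {G\<in>X. G \<subseteq> L \<times> J0}" using \<open>G \<in> X\<close> \<open>RD G = v\<close> by blast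
  next
    fix v assume "v \<in> RD ` {G\<in>X. G \<subseteq> L \<times> J0}"
    then obtain G where "G \<in> X" "G \<subseteq> L \<times> J0" "v = RD G" by blast
    then show "v \<in> lattice_points J0 (card L)"
      using RD_tope_in_lattice_points[OF tope_J0 assms(1) \<open>finite J0\<close>] by simp
  qed
qed

lemma pre_trianguloid_axiom_mono:
  "pre_trianguloid_axiom R X \<Longrightarrow> Y \<subseteq> X \<Longrightarrow> J \<subseteq> R \<Longrightarrow> pre_trianguloid_axiom J Y"
  unfolding pre_trianguloid_axiom_def by blast

lemma tope_Int_subset_iff:
  assumes G: "tope L R G" and "I0 \<subseteq> L"
  shows "G \<inter> (I0 \<times> R) \<subseteq> I0 \<times> J0 \<longleftrightarrow> (\<forall>i\<in>I0. \<exists>j\<in>J0. (i,j) \<in> G)"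
proof
  assume sub: "G \<inter> (I0 \<times> R) \<subseteq> I0 \<times> J0"
  show "\<forall>i\<in>I0. \<exists>j\<in>J0. (i,j) \<in> G"
  proof
    fix i assume "i \<in> I0"
    then have "(i, tope_fun G i) \<in> G \<inter> (I0 \<times> R)"
      using tope_fun_mem[OF G] tope_fun_in[OF G] \<open>I0 \<subseteq> L\<close> by blast
    then show "\<exists>j\<in>J0. (i,j) \<in> G" using sub by blast
  qed
qed (auto simp: tope_mem_iff[OF G])

lemma tope_minor_eq_restrict:
  assumes topes: "\<forall>G\<in>X. tope L R G" and "I0 \<subseteq> L" "J0 \<subseteq> R"
  shows "tope_minor I0 J0 X = {G' \<in> (\<lambda>G. G \<inter> (I0 \<times> R)) ` X. G' \<subseteq> I0 \<times> J0}"
proof (intro subset_antisym subsetI)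
  fix G' assume "G' \<in> tope_minor I0 J0 X"
  then obtain G where G: "G \<in> X" "\<forall>i\<in>I0. \<exists>j\<in>J0. (i,j) \<in> G" "G' = G \<inter> (I0 \<times> J0)"
    unfolding tope_minor_def by blast
  have "G \<inter> (I0 \<times> R) \<subseteq> I0 \<times> J0"
    using tope_Int_subset_iff[OF bspec[OF topes \<open>G \<in> X\<close>] \<open>I0 \<subseteq> L\<close>] G(2) by (rule iffD2)
  then have "G' = G \<inter> (I0 \<times> R)" using G(3) \<open>J0 \<subseteq> R\<close> by blast
  then show "G' \<in> {G' \<in> (\<lambda>G. G \<inter> (I0 \<times> R)) ` X. G' \<subseteq> I0 \<times> J0}"
    using \<open>G \<in> X\<close> G(3) by blast
next
  fix G' assume "G' \<in> {G' \<in> (\<lambda>G. G \<inter> (I0 \<times> R)) ` X. G' \<subseteq> I0 \<times> J0}"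
  then obtain G where G: "G \<in> X" "G' = G \<inter> (I0 \<times> R)" "G \<inter> (I0 \<times> R) \<subseteq> I0 \<times> J0" by blast
  have "\<forall>i\<in>I0. \<exists>j\<in>J0. (i,j) \<in> G"
    using tope_Int_subset_iff[OF bspec[OF topes \<open>G \<in> X\<close>] \<open>I0 \<subseteq> L\<close>] G(3) by (rule iffD1)
  moreover have "G' = G \<inter> (I0 \<times> J0)" using G(2,3) \<open>J0 \<subseteq> R\<close> by blast
  ultimately show "G' \<in> tope_minor I0 J0 X"
    unfolding tope_minor_def using \<open>G \<in> X\<close> by blast
qed

lemma tope_minor_tope_family:
  assumes "finite L" "finite R" "I0 \<subseteq> L" "J0 \<subseteq> R" "J0 \<noteq> {}"
    and "tope_family L R X" "pre_trianguloid_axiom R X"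
  shows "tope_family I0 J0 (tope_minor I0 J0 X)" "pre_trianguloid_axiom J0 (tope_minor I0 J0 X)"
proof -
  define X1 where "X1 = (\<lambda>G. G \<inter> (I0 \<times> R)) ` X"
  have "R \<noteq> {}" using assms(4,5) by blast
  then have X1: "tope_family I0 R X1 \<and> pre_trianguloid_axiom R X1"
    unfolding X1_def by (rule tope_family_restrict_left[OF assms(1,2) _ assms(3,6,7)])
  have "\<forall>G\<in>X. tope L R G" using tope_family_tope[OF assms(6)] by blast
  then have minor: "tope_minor I0 J0 X = {G\<in>X1. G \<subseteq> I0 \<times> J0}"
    unfolding X1_def by (rule tope_minor_eq_restrict[OF _ assms(3,4)])
  have "finite I0" using assms(1,3) by (rule finite_subset[rotated])
  show "tope_family I0 J0 (tope_minor I0 J0 X)"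
    unfolding minor using X1 by (intro tope_family_restrict_right[OF \<open>finite I0\<close> assms(2,4)]) simp
  show "pre_trianguloid_axiom J0 (tope_minor I0 J0 X)"
    unfolding minor using X1 by (intro pre_trianguloid_axiom_mono[OF _ _ assms(4)]) auto
qed

theorem pre_trianguloid_tope_minor:
  assumes "finite L" "finite R" "I0 \<subseteq> L" "J0 \<subseteq> R" "J0 \<noteq> {}" "pre_trianguloid L R T"
  shows "\<exists>T'. pre_trianguloid I0 J0 T' \<and>
    tope_minor I0 J0 (T ` lattice_points R (card L)) = T' ` lattice_points J0 (card I0)"
proof -
  let ?M = "tope_minor I0 J0 (T ` lattice_points R (card L))"
  note X = pre_trianguloid_imp_family[OF assms(6)]
  have M: "tope_family I0 J0 ?M" "pre_trianguloid_axiom J0 ?M"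
    using tope_minor_tope_family[OF assms(1-5) X] by auto
  have "pre_trianguloid I0 J0 (tope_at ?M)" by (rule family_imp_pre_trianguloid[OF M])
  moreover have "?M = tope_at ?M ` lattice_points J0 (card I0)"
    by (rule tope_family_eq_image_tope_at[OF M(1)])
  ultimately show ?thesis by blast
qed

theorem ext_tope_arrangement_tope_minor:
  assumes "finite L" "finite R" "I0 \<subseteq> L" "J0 \<subseteq> R" "J0 \<noteq> {}" "ext_tope_arrangement L R T"
  shows "\<exists>T'. ext_tope_arrangement I0 J0 T' \<and>
    tope_minor I0 J0 (T ` lattice_points R (card L)) = T' ` lattice_points J0 (card I0)"
proof -
  let ?X = "T ` lattice_points R (card L)"
  let ?M = "tope_minor I0 J0 ?X"
  note X = ext_tope_arrangement_imp_family[OF assms(6)]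
  have "\<forall>G\<in>?X. tope L R G" using tope_family_tope[OF X(1)] by blast
  then have "pre_trianguloid_axiom R ?X"
    by (rule pairwise_compatible_imp_pre_trianguloid_axiom[OF assms(1) _ X(2)])
  then have M: "tope_family I0 J0 ?M" by (rule tope_minor_tope_family(1)[OF assms(1-5) X(1)])
  have "ext_tope_arrangement I0 J0 (tope_at ?M)"
    by (rule family_imp_ext_tope_arrangement[OF M pairwise_compatible_tope_minor[OF X(2)]])
  moreover have "?M = tope_at ?M ` lattice_points J0 (card I0)"
    by (rule tope_family_eq_image_tope_at[OF M])
  ultimately show ?thesis by blast
qed

section \<open>Restricting a matching ensemble\<close>

lemma perfect_matching_unique:
  assumes "perfect_matching I J P"
  shows "(i,j) \<in> P \<Longrightarrow> (i,j') \<in> P \<Longrightarrow> j = j'" "(i,j) \<in> P \<Longrightarrow> (i',j) \<in> P \<Longrightarrow> i = i'"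
  using assms unfolding perfect_matching_def by blast+

lemma perfect_matching_Domain_Range:
  assumes "perfect_matching I J P" shows "Domain P = I" "Range P = J"
proof -
  have "P \<subseteq> I \<times> J" "\<forall>i\<in>I. \<exists>j. (i,j) \<in> P" "\<forall>j\<in>J. \<exists>i. (i,j) \<in> P"
    using assms unfolding perfect_matching_def by auto
  then show "Domain P = I" "Range P = J" by (auto simp: Domain_iff Range_iff)
qed

lemma perfect_matching_Int:
  assumes "perfect_matching I J M"
  shows "perfect_matching (Domain (M \<inter> A)) (Range (M \<inter> A)) (M \<inter> A)"
  unfolding perfect_matching_def
proof (intro conjI ballI)
  show "M \<inter> A \<subseteq> Domain (M \<inter> A) \<times> Range (M \<inter> A)" by auto
next
  fix i assume "i \<in> Domain (M \<inter> A)"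
  then obtain j where "(i,j) \<in> M \<inter> A" by auto
  then show "\<exists>!j. (i,j) \<in> M \<inter> A" using perfect_matching_unique(1)[OF assms] by blast
next
  fix j assume "j \<in> Range (M \<inter> A)"
  then obtain i where "(i,j) \<in> M \<inter> A" by auto
  then show "\<exists>!i. (i,j) \<in> M \<inter> A" using perfect_matching_unique(2)[OF assms] by blast
qed

lemma perfect_matching_card:
  assumes "finite I" "perfect_matching I J P" shows "card I = card J"
proof -
  have "inj_on fst P" "inj_on snd P"
    using perfect_matching_unique[OF assms(2)] by (auto simp: inj_on_def)
  then have "card (fst ` P) = card (snd ` P)" by (simp add: card_image)
  then show ?thesis
    using perfect_matching_Domain_Range[OF assms(2)] by (simp add: fst_eq_Domain snd_eq_Range)
qed

lemma perfect_matching_subset_eq: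
  assumes P: "perfect_matching I J P" and Q: "perfect_matching I J Q" and "Q \<subseteq> P"
  shows "P = Q"
proof (intro subset_antisym subsetI)
  fix p assume "p \<in> P"
  obtain i j where "p = (i,j)" by fastforce
  have "i \<in> Domain Q" using \<open>p \<in> P\<close> \<open>p = (i,j)\<close> perfect_matching_Domain_Range(1)[OF P]
      perfect_matching_Domain_Range(1)[OF Q] by blast
  then obtain j' where "(i,j') \<in> Q" by blast
  then have "j' = j"
    using perfect_matching_unique(1)[OF P] \<open>Q \<subseteq> P\<close> \<open>p \<in> P\<close> \<open>p = (i,j)\<close> by blast
  then show "p \<in> Q" using \<open>(i,j') \<in> Q\<close> \<open>p = (i,j)\<close> by simp
qed (use \<open>Q \<subseteq> P\<close> in blast)

lemma matching_ensemble_perfect_matching: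
  assumes "matching_ensemble L R M" "I \<subseteq> L" "J \<subseteq> R" "card I = card J"
  shows "perfect_matching I J (M I J)"
  using conjunct1[OF assms(1)[unfolded matching_ensemble_def]] assms(2-4) by blast

lemma matching_ensemble_closure:
  assumes "matching_ensemble L R M" "I \<subseteq> L" "J \<subseteq> R" "card I = card J" "I' \<subseteq> I" "J' \<subseteq> J"
    "P \<subseteq> M I J" "perfect_matching I' J' P"
  shows "M I' J' \<subseteq> M I J"
  using conjunct1[OF conjunct2[OF assms(1)[unfolded matching_ensemble_def]]] assms(2-8) by blast

lemma matching_ensemble_mono:
  assumes "matching_ensemble L R M" "L' \<subseteq> L" "R' \<subseteq> R"
  shows "matching_ensemble L' R' M"
proof -
  note c = assms(1)[unfolded matching_ensemble_def]
  note left_linkage = conjunct1[OF conjunct2[OF conjunct2[OF c]], rule_format]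
  note right_linkage = conjunct2[OF conjunct2[OF conjunct2[OF c]], rule_format]
  have sub: "I \<subseteq> L" "J \<subseteq> R" if "I \<subseteq> L'" "J \<subseteq> R'" for I J using that assms(2,3) by auto
  show ?thesis unfolding matching_ensemble_def
  proof (intro conjI allI impI)
    fix I J assume "I \<subseteq> L'" "J \<subseteq> R'" "card I = card J"
    then show "perfect_matching I J (M I J)"
      by (intro matching_ensemble_perfect_matching[OF assms(1) sub])
  next
    fix I J I' J' assume "I \<subseteq> L'" "J \<subseteq> R'" "card I = card J" "I' \<subseteq> I" "J' \<subseteq> J"
      "\<exists>P. P \<subseteq> M I J \<and> perfect_matching I' J' P"
    then show "M I' J' \<subseteq> M I J"
      using matching_ensemble_closure[OF assms(1) sub] by blast
  next
    fix I J assume "I \<subseteq> L'" "J \<subseteq> R'" "card I = card J + 1"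
    then show "let E = \<Union>{M I' J | I'. I' \<subseteq> I \<and> card I' = card J}
        in spanning_tree I J E \<and> (\<forall>j\<in>J. RD E j = 2)"
      by (intro left_linkage sub)
  next
    fix I J assume "I \<subseteq> L'" "J \<subseteq> R'" "card I + 1 = card J"
    then show "let E = \<Union>{M I J' | J'. J' \<subseteq> J \<and> card J' = card I}
        in spanning_tree I J E \<and> (\<forall>i\<in>I. ldeg E i = 2)"
      by (intro right_linkage sub)
  qed
qed

lemma matching_ensemble_Int_eq:
  fixes I0 J0
  assumes M: "matching_ensemble L R M" and "finite L" "I \<subseteq> L" "J \<subseteq> R" "card I = card J"
  defines "P \<equiv> M I J \<inter> (I0 \<times> J0)"
  shows "card (Domain P) = card (Range P)" "P = M (Domain P) (Range P)"
proof -
  have pm: "perfect_matching I J (M I J)" by (rule matching_ensemble_perfect_matching[OF M assms(3-5)])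
  then have "M I J \<subseteq> I \<times> J" unfolding perfect_matching_def by blast
  then have sub: "Domain P \<subseteq> I" "Range P \<subseteq> J" unfolding P_def by auto
  have pmP: "perfect_matching (Domain P) (Range P) P" unfolding P_def by (rule perfect_matching_Int[OF pm])
  have "finite (Domain P)" using \<open>finite L\<close> sub(1) \<open>I \<subseteq> L\<close> by (meson finite_subset)
  then show card: "card (Domain P) = card (Range P)" by (rule perfect_matching_card[OF _ pmP])
  have pm': "perfect_matching (Domain P) (Range P) (M (Domain P) (Range P))"
    using sub assms(3,4) card by (intro matching_ensemble_perfect_matching[OF M]) auto
  have "M (Domain P) (Range P) \<subseteq> M I J"
    by (rule matching_ensemble_closure[OF M assms(3-5) sub _ pmP]) (simp add: P_def)
  moreover have "M (Domain P) (Range P) \<subseteq> I0 \<times> J0"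
    using pm' unfolding perfect_matching_def P_def by blast
  ultimately have "M (Domain P) (Range P) \<subseteq> P" unfolding P_def by blast
  then show "P = M (Domain P) (Range P)" by (rule perfect_matching_subset_eq[OF pmP pm'])
qed

theorem matching_ensemble_restrict:
  assumes M: "matching_ensemble L R M" and "finite L" "I0 \<subseteq> L" "J0 \<subseteq> R"
  shows "{M I J \<inter> (I0 \<times> J0) | I J. I \<subseteq> L \<and> J \<subseteq> R \<and> card I = card J}
    = {M I J | I J. I \<subseteq> I0 \<and> J \<subseteq> J0 \<and> card I = card J}"
proof (intro subset_antisym subsetI)
  fix P assume "P \<in> {M I J \<inter> (I0 \<times> J0) | I J. I \<subseteq> L \<and> J \<subseteq> R \<and> card I = card J}"
  then obtain I J where IJ: "I \<subseteq> L" "J \<subseteq> R" "card I = card J" "P = M I J \<inter> (I0 \<times> J0)" by blast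
  note eq = matching_ensemble_Int_eq[OF M \<open>finite L\<close> IJ(1-3), of I0 J0]
  have "Domain P \<subseteq> I0" "Range P \<subseteq> J0" using IJ(4) by auto
  then show "P \<in> {M I J | I J. I \<subseteq> I0 \<and> J \<subseteq> J0 \<and> card I = card J}"
    using eq IJ(4) by blast
next
  fix P assume "P \<in> {M I J | I J. I \<subseteq> I0 \<and> J \<subseteq> J0 \<and> card I = card J}"
  then obtain I J where IJ: "I \<subseteq> I0" "J \<subseteq> J0" "card I = card J" "P = M I J" by blast
  have "I \<subseteq> L" "J \<subseteq> R" using IJ assms(3,4) by auto
  then have "M I J \<subseteq> I \<times> J"
    using matching_ensemble_perfect_matching[OF M _ _ IJ(3)] unfolding perfect_matching_def by blast
  then have "P = M I J \<inter> (I0 \<times> J0)" using IJ by blast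
  then show "P \<in> {M I J \<inter> (I0 \<times> J0) | I J. I \<subseteq> L \<and> J \<subseteq> R \<and> card I = card J}"
    using \<open>I \<subseteq> L\<close> \<open>J \<subseteq> R\<close> IJ(3) by blast
qed

lemma matching_ensemble_ex1_matching:
  assumes M: "matching_ensemble L R M" and "I0 \<subseteq> L" "J0 \<subseteq> R"
    and "I \<subseteq> I0" "J \<subseteq> J0" "card I = card J"
  shows "\<exists>!P. P \<in> {M I J | I J. I \<subseteq> I0 \<and> J \<subseteq> J0 \<and> card I = card J} \<and> perfect_matching I J P"
proof (rule ex1I)
  have "I \<subseteq> L" "J \<subseteq> R" using assms(2-5) by auto
  then show "M I J \<in> {M I J | I J. I \<subseteq> I0 \<and> J \<subseteq> J0 \<and> card I = card J} \<and> perfect_matching I J (M I J)"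
    using matching_ensemble_perfect_matching[OF M _ _ \<open>card I = card J\<close>] assms(4-6) by blast
next
  fix P assume "P \<in> {M I J | I J. I \<subseteq> I0 \<and> J \<subseteq> J0 \<and> card I = card J} \<and> perfect_matching I J P"
  then obtain I' J' where "P = M I' J'" "I' \<subseteq> I0" "J' \<subseteq> J0" "card I' = card J'"
    and "perfect_matching I J P" by blast
  moreover have "perfect_matching I' J' P"
    unfolding \<open>P = M I' J'\<close> using calculation(2-4) assms(2,3)
    by (intro matching_ensemble_perfect_matching[OF M]) auto
  ultimately have "I' = I" "J' = J"
    using perfect_matching_Domain_Range[of I' J' P] perfect_matching_Domain_Range[of I J P] by simp_all
  then show "P = M I J" using \<open>P = M I' J'\<close> by simp
qed

theorem mainTheorem6:
  fixes n d :: nat and I0 J0 :: "nat set"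
  assumes "I0 \<subseteq> {1..n}" "I0 \<noteq> {}" "J0 \<subseteq> {1..d}" "J0 \<noteq> {}"
  shows
   "(\<forall>M. matching_ensemble {1..n} {1..d} M \<longrightarrow>
      {M I J \<inter> (I0 \<times> J0) | I J. I \<subseteq> {1..n} \<and> J \<subseteq> {1..d} \<and> card I = card J}
        = {M I J | I J. I \<subseteq> I0 \<and> J \<subseteq> J0 \<and> card I = card J} \<and>
      (\<forall>I J. I \<subseteq> I0 \<longrightarrow> J \<subseteq> J0 \<longrightarrow> card I = card J \<longrightarrow>
         (\<exists>!P. P \<in> {M I J | I J. I \<subseteq> I0 \<and> J \<subseteq> J0 \<and> card I = card J}
               \<and> perfect_matching I J P)) \<and>
      matching_ensemble I0 J0 M)
    \<and>
    (\<forall>T. ext_tope_arrangement {1..n} {1..d} T \<longrightarrow>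
      (\<exists>T'. ext_tope_arrangement I0 J0 T' \<and>
         tope_minor I0 J0 (T ` lattice_points {1..d} n) = T' ` lattice_points J0 (card I0)))
    \<and>
    (\<forall>T. pre_trianguloid {1..n} {1..d} T \<longrightarrow>
      (\<exists>T'. pre_trianguloid I0 J0 T' \<and>
         tope_minor I0 J0 (T ` lattice_points {1..d} n) = T' ` lattice_points J0 (card I0)))"
proof -
  have fin: "finite {1..n}" "finite {1..d}" and card: "card {1..n} = n" by simp_all
  note ext_minor = ext_tope_arrangement_tope_minor[OF fin assms(1,3,4), unfolded card]
  note pre_minor = pre_trianguloid_tope_minor[OF fin assms(1,3,4), unfolded card]
  show ?thesis
    by (intro conjI allI impI matching_ensemble_restrict[OF _ fin(1) assms(1,3)]
        matching_ensemble_ex1_matching[OF _ assms(1,3)] matching_ensemble_mono[OF _ assms(1,3)]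
        ext_minor pre_minor)
qed

end
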